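(* Let $q > 0$ and let $m \geq 1$ be an integer. Then \[ \sum_{n=m}^{\lfloor m^2/q \rfloor} \Phi_{n,m}^2 \leq 4\, \frac{m^2}{q}\, e^{-q}. \]
   Context: For integers $n \ge m \ge 1$, $\Phi_{n,m} := \min_{p \in \Pi_m} \max_{|x| \leq 1} |x^n - p(x)|$, where $\Pi_m$ is the set of polynomials with real coefficients of degree at most $m$ and the maximum is over real $x \in [-1,1]$. An empty sum is zero. *)

theory Defs
  imports "HOL-Analysis.Analysis" "HOL-Computational_Algebra.Polynomial"
begin

text \<open>The minimum over polynomials is rendered as an infimum (it is attained), and the
  maximum over [-1,1] as a supremum (attained by continuity and compactness).\<close>
definition Phi :: "nat \<Rightarrow> nat \<Rightarrow> real" where
  "Phi n m = Inf {Sup ((\<lambda>x. \<bar>x ^ n - poly p x\<bar>) ` {-1..1}) | p :: real poly. degree p \<le> m}"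

end

theory Submission
  imports Defs "HOL-Probability.Probability"
begin

text \<open>
  Write x = cos t. Expanding cos t = (e^(it) + e^(-it))/2 binomially gives
  x^n = E[cos ((n - 2B) t)] = E[T_|n-2B| (x)] with B ~ Bin(n, 1/2) and T_k the Chebyshev
  polynomials. Keeping only the terms with |n - 2B| \<le> m yields a polynomial of degree at most m
  whose uniform error on [-1,1] is at most P(|n - 2B| > m), and Hoeffding's inequality bounds this
  by 2 exp (-m^2/(2n)). Hence Phi(n,m)^2 \<le> 4 exp (-q) whenever n \<le> m^2/q, and the sum has at
  most m^2/q terms.
\<close>

fun chebyshev :: "nat \<Rightarrow> real poly" where
  "chebyshev 0 = 1"
| "chebyshev (Suc 0) = [:0, 1:]"
| "chebyshev (Suc (Suc k)) = [:0, 2:] * chebyshev (Suc k) - chebyshev k"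

lemma degree_chebyshev_le: "degree (chebyshev k) \<le> k"
proof (induction k rule: chebyshev.induct)
  case (3 k)
  have "degree ([:0, 2:] * chebyshev (Suc k)) \<le> Suc (Suc k)"
    using degree_mult_le[of "[:0, 2:]" "chebyshev (Suc k)"] 3(1) by auto
  moreover have "degree (chebyshev k) \<le> Suc (Suc k)"
    using 3(2) by simp
  ultimately show ?case
    by (simp add: degree_diff_le)
qed auto

lemma poly_chebyshev_cos: "poly (chebyshev k) (cos t) = cos (real k * t)"
proof (induction k rule: chebyshev.induct)
  case (3 k)
  have "cos (real (Suc (Suc k)) * t) = cos (real (Suc k) * t + t)"
   and "cos (real k * t) = cos (real (Suc k) * t - t)"
    by (simp_all add: algebra_simps)
  with 3 show ?case
    by (simp add: cos_add cos_diff)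
qed auto

lemma cos_power_eq_binomial_sum:
  "cos t ^ n = (\<Sum>j\<le>n. pmf (binomial_pmf n (1/2)) j * cos ((real n - 2 * real j) * t))"
proof -
  have "complex_of_real (cos t) = cis (-t) / 2 + cis t / 2"
    by (simp add: cis.ctr complex_eq_iff)
  then have "complex_of_real (cos t ^ n) = (cis (-t) / 2 + cis t / 2) ^ n"
    by (metis of_real_power)
  also have "\<dots> = (\<Sum>j\<le>n. of_nat (n choose j) * (cis (-t) / 2) ^ j * (cis t / 2) ^ (n - j))"
    by (rule binomial_ring)
  also have "\<dots> = (\<Sum>j\<le>n. of_real (pmf (binomial_pmf n (1/2)) j) * cis ((real n - 2 * real j) * t))"
  proof (rule sum.cong[OF refl])
    fix j assume "j \<in> {..n}"
    have "cis (-t) ^ j * cis t ^ (n - j) = cis (real j * (-t) + real (n - j) * t)"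
      by (simp only: Complex.DeMoivre cis_mult)
    also have "real j * (-t) + real (n - j) * t = (real n - 2 * real j) * t"
      using \<open>j \<in> {..n}\<close> by (simp add: of_nat_diff algebra_simps)
    finally have "(cis (-t) / 2) ^ j * (cis t / 2) ^ (n - j) = cis ((real n - 2 * real j) * t) / 2 ^ n"
      using \<open>j \<in> {..n}\<close> by (simp add: power_divide flip: power_add)
    then show "of_nat (n choose j) * (cis (-t) / 2) ^ j * (cis t / 2) ^ (n - j) =
        of_real (pmf (binomial_pmf n (1/2)) j) * cis ((real n - 2 * real j) * t)"
      using \<open>j \<in> {..n}\<close> by (simp add: power_divide flip: power_add)
  qed
  finally have "Re (complex_of_real (cos t ^ n)) =
      Re (\<Sum>j\<le>n. of_real (pmf (binomial_pmf n (1/2)) j) * cis ((real n - 2 * real j) * t))"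
    by (rule arg_cong)
  then show ?thesis
    by (simp add: Re_sum)
qed

lemma bdd_above_approx_error: "bdd_above ((\<lambda>x. \<bar>x ^ n - poly p x\<bar>) ` {-1..1::real})"
  by (intro bounded_imp_bdd_above compact_imp_bounded compact_continuous_image compact_Icc)
     (intro continuous_intros)

lemma Sup_approx_error_nonneg: "0 \<le> Sup ((\<lambda>x. \<bar>x ^ n - poly p x\<bar>) ` {-1..1::real})"
proof -
  have "\<bar>0 ^ n - poly p 0\<bar> \<le> Sup ((\<lambda>x. \<bar>x ^ n - poly p x\<bar>) ` {-1..1::real})"
    by (rule cSup_upper[OF _ bdd_above_approx_error]) auto
  then show ?thesis
    by linarith
qed

lemma Phi_nonneg: "0 \<le> Phi n m"
  unfolding Phi_def
proof (rule cInf_greatest)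
  show "{Sup ((\<lambda>x. \<bar>x ^ n - poly p x\<bar>) ` {-1..1}) | p. degree p \<le> m} \<noteq> {}"
    by (auto intro: exI[of _ 0])
qed (auto simp: Sup_approx_error_nonneg)

lemma Phi_le:
  assumes "degree p \<le> m" and "\<And>x. x \<in> {-1..1} \<Longrightarrow> \<bar>x ^ n - poly p x\<bar> \<le> E"
  shows "Phi n m \<le> E"
proof -
  have "Phi n m \<le> Sup ((\<lambda>x. \<bar>x ^ n - poly p x\<bar>) ` {-1..1::real})"
    unfolding Phi_def
    by (rule cInf_lower) (use assms(1) Sup_approx_error_nonneg in \<open>auto simp: bdd_below_def\<close>)
  also have "\<dots> \<le> E"
    using assms(2) by (intro cSup_least) auto
  finally show ?thesis .
qed

lemma Phi_le_binomial_tail: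
  "Phi n m \<le> measure_pmf.prob (binomial_pmf n (1/2)) {j. real m < \<bar>real n - 2 * real j\<bar>}"
proof -
  let ?w = "pmf (binomial_pmf n (1/2))"
  define near where "near = {j. \<bar>real n - 2 * real j\<bar> \<le> real m}"
  define d where "d j = nat \<bar>int n - 2 * int j\<bar>" for j
  have d: "real (d j) = \<bar>real n - 2 * real j\<bar>" for j
    by (simp add: d_def)
  have poly_d: "poly (chebyshev (d j)) (cos t) = cos ((real n - 2 * real j) * t)" for j t
    using cos_minus[of "(real n - 2 * real j) * t"]
    by (cases "real n - 2 * real j \<ge> 0") (simp_all add: poly_chebyshev_cos d algebra_simps)
  define p where "p = (\<Sum>j\<in>{..n} \<inter> near. smult (?w j) (chebyshev (d j)))"
  have "degree p \<le> m"
    unfolding p_def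
  proof (rule degree_sum_le)
    fix j assume "j \<in> {..n} \<inter> near"
    then have "d j \<le> m"
      using d[of j] by (simp add: near_def)
    then show "degree (smult (?w j) (chebyshev (d j))) \<le> m"
      using degree_chebyshev_le[of "d j"] degree_smult_le[of "?w j" "chebyshev (d j)"] by linarith
  qed simp
  moreover have "\<bar>x ^ n - poly p x\<bar> \<le> (\<Sum>j\<in>{..n} - near. ?w j)" if "x \<in> {-1..1}" for x
  proof -
    define t where "t = arccos x"
    have x: "x = cos t"
      using that by (simp add: t_def)
    have "x ^ n - poly p x = (\<Sum>j\<in>{..n} - near. ?w j * cos ((real n - 2 * real j) * t))"
    proof -
      have "x ^ n = (\<Sum>j\<le>n. ?w j * cos ((real n - 2 * real j) * t))"
        by (simp add: x cos_power_eq_binomial_sum)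
      moreover have "poly p x = (\<Sum>j\<in>{..n} \<inter> near. ?w j * cos ((real n - 2 * real j) * t))"
        by (simp add: p_def poly_sum x poly_d)
      ultimately show ?thesis
        using sum.Int_Diff[of "{..n}" "\<lambda>j. ?w j * cos ((real n - 2 * real j) * t)" near]
        by (simp del: pmf_binomial)
    qed
    also have "\<bar>\<dots>\<bar> \<le> (\<Sum>j\<in>{..n} - near. \<bar>?w j * cos ((real n - 2 * real j) * t)\<bar>)"
      by (rule sum_abs)
    also have "\<dots> \<le> (\<Sum>j\<in>{..n} - near. ?w j)"
      by (intro sum_mono) (simp add: abs_mult mult_left_le)
    finally show ?thesis .
  qed
  ultimately have "Phi n m \<le> (\<Sum>j\<in>{..n} - near. ?w j)"
    by (rule Phi_le)
  also have "\<dots> = measure_pmf.prob (binomial_pmf n (1/2)) {j. real m < \<bar>real n - 2 * real j\<bar>}"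
  proof -
    have "{..n} - near = {j. real m < \<bar>real n - 2 * real j\<bar>} \<inter> set_pmf (binomial_pmf n (1/2))"
      by (auto simp: near_def)
    then show ?thesis
      by (metis finite_Diff finite_atMost measure_Int_set_pmf measure_measure_pmf_finite)
  qed
  finally show ?thesis .
qed

lemma Phi_le_exp:
  assumes "n > 0"
  shows "Phi n m \<le> 2 * exp (- (real m ^ 2 / (2 * real n)))"
proof -
  have "{j. real m < \<bar>real n - 2 * real j\<bar>} \<subseteq> {j. real m / 2 \<le> \<bar>real j - real n * (1/2)\<bar>}"
    by (auto simp: abs_if split: if_splits)
  then have "measure_pmf.prob (binomial_pmf n (1/2)) {j. real m < \<bar>real n - 2 * real j\<bar>}
      \<le> measure_pmf.prob (binomial_pmf n (1/2)) {j. real m / 2 \<le> \<bar>real j - real n * (1/2)\<bar>}"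
    by (rule measure_pmf.finite_measure_mono) simp
  also have "\<dots> \<le> 2 * exp (- 2 * (real m / 2)\<^sup>2 / real n)"
    by (rule binomial_distribution.prob_abs_ge) (use assms in \<open>simp_all add: binomial_distribution_def\<close>)
  also have "- 2 * (real m / 2)\<^sup>2 / real n = - (real m ^ 2 / (2 * real n))"
    by (simp add: power_divide)
  finally show ?thesis
    using Phi_le_binomial_tail[of n m] by linarith
qed

lemma Phi_squared_le_exp:
  assumes "q > 0" and "n > 0" and "real n \<le> real m ^ 2 / q"
  shows "(Phi n m)\<^sup>2 \<le> 4 * exp (- q)"
proof -
  have "(Phi n m)\<^sup>2 \<le> (2 * exp (- (real m ^ 2 / (2 * real n))))\<^sup>2"
    using Phi_nonneg Phi_le_exp[OF assms(2)] by (intro power_mono)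
  also have "\<dots> = 4 * exp (- (real m ^ 2 / real n))"
    by (simp add: power_mult_distrib flip: exp_of_nat_mult)
  also have "\<dots> \<le> 4 * exp (- q)"
    using assms by (simp add: field_simps)
  finally show ?thesis .
qed

theorem lemma2:
  fixes q :: real and m :: nat
  assumes "q > 0" and "m \<ge> 1"
  shows "(\<Sum>n = m..nat \<lfloor>real m ^ 2 / q\<rfloor>. (Phi n m)^2) \<le> 4 * (real m ^ 2 / q) * exp (- q)"
proof -
  define N where "N = nat \<lfloor>real m ^ 2 / q\<rfloor>"
  have N: "real N \<le> real m ^ 2 / q"
    using assms(1) by (simp add: N_def)
  have "(\<Sum>n = m..N. (Phi n m)^2) \<le> real (card {m..N}) * (4 * exp (- q))"
    by (rule sum_bounded_above) (use assms N Phi_squared_le_exp in auto)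
  also have "\<dots> \<le> real m ^ 2 / q * (4 * exp (- q))"
    by (intro mult_right_mono) (use N assms in auto)
  finally show ?thesis
    by (simp add: N_def mult_ac)
qed

end
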